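(* Let $n\in\mathbb{N}=\{0,1,2,\ldots\}$ and let $r\in\{3,4,5,\ldots\}$. Then $2^{-n}\,\det\big[f^{(r)}_{i+j}\big]_{0\le i,j\le n}$ is an odd integer. Furthermore, $6^{-n}\,\det\big[f_{i+j}\big]_{0\le i,j\le n}$ is a positive odd integer.
   Context: For $m\in\mathbb{N}$, the Franel numbers are $f_m=\sum_{k=0}^m\binom{m}{k}^3$, and for an integer $r\ge 3$ the $r$-th order Franel numbers are $f^{(r)}_m=\sum_{k=0}^m\binom{m}{k}^r$. For a sequence $(a_m)_{m\ge0}$, $\det[a_{i+j}]_{0\le i,j\le n}$ denotes the determinant of the $(n+1)\times(n+1)$ Hankel matrix with $(i,j)$-entry $a_{i+j}$. *)

theory Defs
  imports "Jordan_Normal_Form.Determinant"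
begin

definition franel_r :: "nat \<Rightarrow> nat \<Rightarrow> int" where
  "franel_r r m = (\<Sum>k=0..m. int (m choose k) ^ r)"

definition franel :: "nat \<Rightarrow> int" where
  "franel m = (\<Sum>k=0..m. int (m choose k) ^ 3)"

definition hankel_det :: "(nat \<Rightarrow> int) \<Rightarrow> nat \<Rightarrow> int" where
  "hankel_det a n = det (mat (n+1) (n+1) (\<lambda>(i,j). a (i+j)))"

end

theory Submission
  imports Defs "HOL-Library.Discrete_Functions" "HOL-Number_Theory.Cong"
begin

(* For r >= 2 the numbers a_m = f^(r)_m satisfy a_0 = 1 and, for m >= 1, a_m = 2 (mod 4) if m is
   a power of 2 and a_m = 0 (mod 4) otherwise: modulo 4 the even binomial coefficients cancel in
   symmetric pairs, and the number of odd entries in row m of Pascal's triangle is 2 (mod 4)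
   exactly when m is a power of 2.
   Subtracting x_i times row 0 from row i of the Hankel matrix (x_i = 0 for f^(r), and
   x_i = -2 (-1)^i for f, since f_m = (-1)^m (mod 3)) makes rows 1..n divisible by d = 2 resp. 6.
   After dividing them by d the matrix is congruent mod 2 to one whose lower right block is the
   0-1 matrix [i + j is a power of 2]; exactly one permutation is supported by that block, so the
   quotient is odd.
   For positivity, f_m = N^-2 sum_{a,b<N} K(w^a, w^b)^m for N > m, where w = exp(2 pi i/N) and
   K(x,y) = (1+x)(1+y)(1+1/(xy)) is real on the unit torus: f is a moment sequence, so its Hankel
   matrix is positive definite. *)

section \<open>Franel numbers modulo 4\<close>

lemma sum_atMost_palindromic:
  fixes h :: "nat \<Rightarrow> 'a::comm_semiring_1"
  assumes sym: "\<And>k. k \<le> m \<Longrightarrow> h (m - k) = h k"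
  shows "(\<Sum>k\<le>m. h k) = 2 * (\<Sum>k | 2 * k < m. h k) + (if even m then h (m div 2) else 0)"
proof -
  let ?L = "{k. 2 * k < m}" and ?M = "{k. 2 * k = m}" and ?U = "{k. m < 2 * k \<and> k \<le> m}"
  have fin: "finite ?L" "finite ?M" "finite ?U"
    by (rule finite_subset[of _ "{..m}"]; auto)+
  have "{..m} = ?L \<union> ?M \<union> ?U" by auto
  then have "(\<Sum>k\<le>m. h k) = (\<Sum>k\<in>?L \<union> ?M \<union> ?U. h k)" by simp
  also have "\<dots> = (\<Sum>k\<in>?L \<union> ?M. h k) + (\<Sum>k\<in>?U. h k)"
    by (rule sum.union_disjoint) (use fin in auto)
  also have "(\<Sum>k\<in>?L \<union> ?M. h k) = (\<Sum>k\<in>?L. h k) + (\<Sum>k\<in>?M. h k)"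
    by (rule sum.union_disjoint) (use fin in auto)
  also have "(\<Sum>k\<in>?U. h k) = (\<Sum>k\<in>?L. h k)"
    by (rule sum.reindex_bij_witness[of _ "\<lambda>k. m - k" "\<lambda>k. m - k"]) (auto simp: sym)
  also have "?M = (if even m then {m div 2} else {})" by auto
  finally show ?thesis by (simp add: mult_2 add_ac)
qed

lemma odd_binomial_double: "odd ((2 * m) choose j) \<longleftrightarrow> even j \<and> odd (m choose (j div 2))"
proof -
  have "(2 * m) choose j = (\<Sum>k\<le>j. (m choose k) * (m choose (j - k)))"
    by (simp add: vandermonde mult_2)
  also have "\<dots> = 2 * (\<Sum>k | 2 * k < j. (m choose k) * (m choose (j - k)))
      + (if even j then (m choose (j div 2)) * (m choose (j - j div 2)) else 0)"
    by (rule sum_atMost_palindromic) (simp add: mult.commute)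
  finally show ?thesis
    by (cases "even j") (auto elim!: evenE)
qed

lemma odd_binomial_Suc_double: "odd (Suc (2 * m) choose j) \<longleftrightarrow> odd (m choose (j div 2))"
proof (cases j)
  case (Suc i)
  have "Suc (2 * m) choose Suc i = (2 * m choose i) + (2 * m choose Suc i)"
    by simp
  then show ?thesis
    using Suc odd_binomial_double[of m i] odd_binomial_double[of m "Suc i"]
    by (cases "even i") (auto simp: even_Suc_div_two odd_Suc_div_two)
qed simp

lemma binomial_double_mod_2:
  "(2 * m choose j) mod 2 = (if even j then (m choose (j div 2)) mod 2 else 0)"
  using odd_binomial_double[of m j] by (auto simp: mod_2_eq_odd)

lemma binomial_Suc_double_mod_2: "(Suc (2 * m) choose j) mod 2 = (m choose (j div 2)) mod 2"
  using odd_binomial_Suc_double[of m j] by (auto simp: mod_2_eq_odd)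

definition odd_binomial_count :: "nat \<Rightarrow> nat" where
  "odd_binomial_count m = (\<Sum>k\<le>m. (m choose k) mod 2)"

lemma odd_binomial_count_double: "odd_binomial_count (2 * m) = odd_binomial_count m"
proof -
  have "odd_binomial_count (2 * m) = (\<Sum>k\<le>Suc (2 * m). (2 * m choose k) mod 2)"
    by (simp add: odd_binomial_count_def binomial_eq_0)
  also have "\<dots> = (\<Sum>i\<le>m. (2 * m choose (2 * i)) mod 2 + (2 * m choose Suc (2 * i)) mod 2)"
    by (rule sum.in_pairs_0)
  also have "\<dots> = odd_binomial_count m"
    unfolding odd_binomial_count_def
    by (intro sum.cong refl) (simp add: binomial_double_mod_2)
  finally show ?thesis .
qed

lemma odd_binomial_count_Suc_double: "odd_binomial_count (Suc (2 * m)) = 2 * odd_binomial_count m"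
proof -
  have "odd_binomial_count (Suc (2 * m))
      = (\<Sum>i\<le>m. (Suc (2 * m) choose (2 * i)) mod 2 + (Suc (2 * m) choose Suc (2 * i)) mod 2)"
    unfolding odd_binomial_count_def by (rule sum.in_pairs_0)
  also have "\<dots> = 2 * odd_binomial_count m"
    unfolding odd_binomial_count_def sum_distrib_left
    by (intro sum.cong refl) (simp only: binomial_Suc_double_mod_2, simp)
  finally show ?thesis .
qed

definition is_power_of_2 :: "nat \<Rightarrow> bool" where
  "is_power_of_2 m \<longleftrightarrow> (\<exists>k. m = 2 ^ k)"

lemma is_power_of_2_double: "is_power_of_2 (2 * t) \<longleftrightarrow> is_power_of_2 t"
proof
  assume "is_power_of_2 (2 * t)"
  then obtain k where "2 * t = 2 ^ k" by (auto simp: is_power_of_2_def)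
  then show "is_power_of_2 t"
    by (cases k) (auto simp: is_power_of_2_def)
next
  assume "is_power_of_2 t"
  then show "is_power_of_2 (2 * t)"
    by (auto simp: is_power_of_2_def intro: exI[of _ "Suc _"])
qed

lemma is_power_of_2_Suc_double: "is_power_of_2 (Suc (2 * t)) \<longleftrightarrow> t = 0"
proof
  assume "is_power_of_2 (Suc (2 * t))"
  then obtain k where "Suc (2 * t) = 2 ^ k" by (auto simp: is_power_of_2_def)
  then show "t = 0"
    by (cases k) (simp_all, presburger)
qed (auto simp: is_power_of_2_def intro: exI[of _ 0])

lemma is_power_of_2_between:
  assumes "is_power_of_2 x" "2 ^ e < x" "x < 2 ^ Suc (Suc e)"
  shows "x = 2 ^ Suc e"
proof -
  obtain k where k: "x = 2 ^ k" using assms(1) by (auto simp: is_power_of_2_def)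
  have "e < k" "k < Suc (Suc e)"
    using assms(2,3) unfolding k by (auto intro: power_less_imp_less_exp[of "2::nat"])
  then show ?thesis using k by (simp add: le_Suc_eq less_Suc_eq_le)
qed

lemma odd_binomial_count_mod_4:
  "0 < m \<Longrightarrow> odd_binomial_count m mod 4 = (if is_power_of_2 m then 2 else 0)"
proof (induction m rule: less_induct)
  case (less m)
  have "m = 2 * (m div 2) \<or> m = Suc (2 * (m div 2))"
    by presburger
  then obtain t where "m = 2 * t \<or> m = Suc (2 * t)"
    by blast
  then show ?case
  proof
    assume m: "m = 2 * t"
    then have "0 < t" "t < m" using less.prems by auto
    then show ?thesis
      using less.IH[of t] by (simp add: m odd_binomial_count_double is_power_of_2_double)
  next
    assume m: "m = Suc (2 * t)"
    show ?thesis
    proof (cases "t = 0")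
      case True
      then show ?thesis
        by (auto simp: m odd_binomial_count_def is_power_of_2_def intro: exI[of _ 0])
    next
      case False
      then have "odd_binomial_count t mod 4 = 0 \<or> odd_binomial_count t mod 4 = 2"
        using less.IH[of t] m by auto
      then have "2 * odd_binomial_count t mod 4 = 0"
        by presburger
      then show ?thesis
        using False by (simp add: m odd_binomial_count_Suc_double is_power_of_2_Suc_double)
    qed
  qed
qed

lemma even_central_binomial: "0 < t \<Longrightarrow> even ((2 * t) choose t)"
proof -
  assume "0 < t"
  then obtain s where t: "t = Suc s" by (cases t) auto
  have "(2 * t) choose t = (Suc (2 * s) choose s) + (Suc (2 * s) choose Suc s)"
    by (simp add: t binomial_Suc_Suc)
  also have "Suc (2 * s) choose Suc s = Suc (2 * s) choose s"
    using binomial_symmetric[of "Suc s" "Suc (2 * s)"] by simp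
  finally show ?thesis by simp
qed

lemma four_dvd_sum_palindromic:
  fixes h :: "nat \<Rightarrow> int"
  assumes sym: "\<And>k. k \<le> m \<Longrightarrow> h (m - k) = h k" and even: "\<And>k. even (h k)"
    and middle: "even m \<Longrightarrow> 4 dvd h (m div 2)"
  shows "4 dvd (\<Sum>k\<le>m. h k)"
proof -
  have "2 dvd (\<Sum>k | 2 * k < m. h k)"
    using even by (intro dvd_sum) auto
  then have "4 dvd 2 * (\<Sum>k | 2 * k < m. h k)"
    by (auto elim!: dvdE)
  then show ?thesis
    using middle sum_atMost_palindromic[of m h] sym by simp
qed

lemma even_power_diff_mod_2: "0 < r \<Longrightarrow> even ((c::int) ^ r - c mod 2)"
  by (cases "even c") (simp_all add: even_iff_mod_2_eq_zero[symmetric] odd_iff_mod_2_eq_one)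

lemma four_dvd_power_of_even:
  fixes c :: int
  assumes "even c" "2 \<le> r"
  shows "4 dvd c ^ r"
proof -
  have "2 ^ 2 dvd c ^ 2"
    using assms(1) by (auto elim!: evenE)
  also have "c ^ 2 dvd c ^ r"
    using assms(2) by (rule le_imp_power_dvd)
  finally show ?thesis by simp
qed

lemma franel_r_mod_4:
  assumes r: "2 \<le> r" and m: "0 < m"
  shows "franel_r r m mod 4 = (if is_power_of_2 m then 2 else 0)"
proof -
  define c where "c k = int (m choose k)" for k
  have "4 dvd (\<Sum>k\<le>m. c k ^ r - c k mod 2)"
  proof (rule four_dvd_sum_palindromic)
    show "c (m - k) ^ r - c (m - k) mod 2 = c k ^ r - c k mod 2" if "k \<le> m" for k
      using binomial_symmetric[OF that] by (simp add: c_def)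
    show "even (c k ^ r - c k mod 2)" for k
      using r by (intro even_power_diff_mod_2) simp
    assume "even m"
    then have "m = 2 * (m div 2)" "0 < m div 2"
      using m by auto
    then have "even (c (m div 2))"
      using even_central_binomial[of "m div 2"] by (simp add: c_def)
    then show "4 dvd c (m div 2) ^ r - c (m div 2) mod 2"
      using four_dvd_power_of_even[OF _ r] by simp
  qed
  moreover have "(\<Sum>k\<le>m. c k ^ r - c k mod 2) = franel_r r m - int (odd_binomial_count m)"
    by (simp add: c_def franel_r_def odd_binomial_count_def atLeast0AtMost sum_subtractf zmod_int)
  ultimately have "franel_r r m mod 4 = int (odd_binomial_count m) mod 4"
    by (simp add: mod_eq_dvd_iff)
  also have "\<dots> = int (odd_binomial_count m mod 4)"
    by (simp add: zmod_int)
  finally show ?thesis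
    using odd_binomial_count_mod_4[OF m] by simp
qed

section \<open>Hankel determinants modulo 2\<close>

lemma det_row_reduction:
  fixes A B :: "'a::comm_ring_1 mat"
  assumes A: "A \<in> carrier_mat (Suc n) (Suc n)" and B: "B \<in> carrier_mat (Suc n) (Suc n)"
    and row_0: "\<And>j. j < Suc n \<Longrightarrow> B $$ (0, j) = A $$ (0, j)"
    and rows: "\<And>i j. 0 < i \<Longrightarrow> i < Suc n \<Longrightarrow> j < Suc n \<Longrightarrow>
      A $$ (i, j) - x i * A $$ (0, j) = d * B $$ (i, j)"
  shows "det A = d ^ n * det B"
proof -
  define L where "L = mat (Suc n) (Suc n) (\<lambda>(i, j). if i = j then 1 else if j = 0 then x i else 0)"
  define D where "D = mat (Suc n) (Suc n) (\<lambda>(i, j). if i = j then (if i = 0 then 1 else d) else 0)"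
  have carrier: "L \<in> carrier_mat (Suc n) (Suc n)" "D \<in> carrier_mat (Suc n) (Suc n)"
    by (simp_all add: L_def D_def)
  have DB: "(D * B) $$ (i, j) = (if i = 0 then 1 else d) * B $$ (i, j)"
    if "i < Suc n" "j < Suc n" for i j
  proof -
    have "(D * B) $$ (i, j) = (\<Sum>k<Suc n. D $$ (i, k) * B $$ (k, j))"
      using that B by (simp add: D_def scalar_prod_def lessThan_atLeast0)
    also have "\<dots> = (\<Sum>k<Suc n. if k = i then (if i = 0 then 1 else d) * B $$ (i, j) else 0)"
      using that by (intro sum.cong) (auto simp: D_def)
    finally show ?thesis using that by simp
  qed
  have "A = L * (D * B)"
  proof (rule eq_matI)
    fix i j assume "i < dim_row (L * (D * B))" "j < dim_col (L * (D * B))"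
    then have ij: "i < Suc n" "j < Suc n" using B by (simp_all add: L_def)
    have "(L * (D * B)) $$ (i, j) = (\<Sum>k<Suc n. L $$ (i, k) * (D * B) $$ (k, j))"
      using ij B by (simp add: L_def D_def scalar_prod_def lessThan_atLeast0)
    also have "\<dots> = (\<Sum>k<Suc n. (if k = i then (D * B) $$ (i, j) else 0)
        + (if k = 0 \<and> i \<noteq> 0 then x i * (D * B) $$ (0, j) else 0))"
      using ij by (intro sum.cong) (auto simp: L_def)
    also have "\<dots> = (D * B) $$ (i, j) + (if i \<noteq> 0 then x i * (D * B) $$ (0, j) else 0)"
      using ij by (simp add: sum.distrib)
    also have "\<dots> = A $$ (i, j)"
      using ij rows[of i j] row_0[of j] by (auto simp: DB algebra_simps)
    finally show "A $$ (i, j) = (L * (D * B)) $$ (i, j)" ..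
  qed (use A B in \<open>simp_all add: L_def D_def\<close>)
  moreover have "det L = 1"
    using det_lower_triangular[of "Suc n" L] carrier by (simp add: L_def prod_list_diag_prod)
  moreover have "det D = d ^ n"
  proof -
    have "det D = (\<Prod>i<Suc n. if i = 0 then 1 else d)"
      using det_lower_triangular[of "Suc n" D] carrier
      by (simp add: D_def prod_list_diag_prod lessThan_atLeast0)
    also have "\<dots> = d ^ n"
      by (simp only: prod.lessThan_Suc_shift) simp
    finally show ?thesis .
  qed
  ultimately show ?thesis
    using carrier B by (simp add: det_mult[of _ "Suc n"])
qed

lemma det_cong:
  fixes A B :: "int mat"
  assumes A: "A \<in> carrier_mat k k" and B: "B \<in> carrier_mat k k"
    and entries: "\<And>i j. i < k \<Longrightarrow> j < k \<Longrightarrow> [A $$ (i, j) = B $$ (i, j)] (mod m)"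
  shows "[det A = det B] (mod m)"
  unfolding det_def'[OF A] det_def'[OF B]
  by (intro cong_sum cong_mult cong_refl cong_prod entries)
     (auto dest: permutes_in_image)

lemma det_single_permutation:
  fixes A :: "'a::comm_ring_1 mat"
  assumes A: "A \<in> carrier_mat k k" and Q: "Q permutes {0..<k}"
    and unique: "\<And>p. p permutes {0..<k} \<Longrightarrow> (\<Prod>i = 0..<k. A $$ (i, p i)) \<noteq> 0 \<Longrightarrow> p = Q"
  shows "det A = signof Q * (\<Prod>i = 0..<k. A $$ (i, Q i))"
proof -
  let ?term = "\<lambda>p. signof p * (\<Prod>i = 0..<k. A $$ (i, p i))"
  have "?term p = 0" if "p permutes {0..<k}" "p \<noteq> Q" for p
    using unique[OF that(1)] that(2) by force
  then have "(\<Sum>p \<in> {p. p permutes {0..<k}} - {Q}. ?term p) = 0"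
    by (intro sum.neutral) auto
  moreover have "det A = ?term Q + (\<Sum>p \<in> {p. p permutes {0..<k}} - {Q}. ?term p)"
    unfolding det_def'[OF A] using Q by (subst sum.remove) (auto simp: finite_permutations)
  ultimately show ?thesis by simp
qed

definition power_of_2_matching :: "nat \<Rightarrow> (nat \<Rightarrow> nat) \<Rightarrow> bool" where
  "power_of_2_matching n p \<longleftrightarrow>
     inj_on p {1..n} \<and> (\<forall>i\<in>{1..n}. p i \<in> {1..n} \<and> is_power_of_2 (i + p i))"

lemma power_of_2_matching_surj: "power_of_2_matching n p \<Longrightarrow> p ` {1..n} = {1..n}"
  by (rule endo_inj_surj) (auto simp: power_of_2_matching_def)

text \<open>With 2^e \<le> n < 2^(e+1), any sum i + p i with a summand above 2^e lies strictly
  between 2^e and 2^(e+2), hence equals 2^(e+1).\<close>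
lemma power_of_2_matching_top:
  assumes p: "power_of_2_matching n p" and e: "2 ^ e \<le> n" "n < 2 ^ Suc e"
    and i: "2 ^ Suc e - n \<le> i" "i \<le> n"
  shows "p i = 2 ^ Suc e - i"
proof -
  define h where "h = (2::nat) ^ e"
  have h: "0 < h" "h \<le> n" "n < 2 * h" "2 ^ Suc e = 2 * h"
    using e by (simp_all add: h_def)
  have p_in: "p j \<in> {1..n}" "is_power_of_2 (j + p j)" if "j \<in> {1..n}" for j
    using p that by (auto simp: power_of_2_matching_def)
  have top: "j + p j = 2 * h" if j: "j \<in> {1..n}" "h < j \<or> h < p j" for j
  proof -
    have "2 ^ e < j + p j" "j + p j < 2 ^ Suc (Suc e)"
      using j p_in(1)[OF j(1)] h by (auto simp: h_def)
    then show ?thesis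
      using is_power_of_2_between p_in(2)[OF j(1)] by (simp add: h_def)
  qed
  have upper: "p j = 2 * h - j" if j: "h \<le> j" "j \<le> n" for j
  proof (cases "h < j")
    case True
    then show ?thesis using top[of j] j h by auto
  next
    case False
    then have j_eq: "j = h" and j_in: "j \<in> {1..n}" using j h by auto
    consider "h < p j" | "p j < h" | "p j = h" by linarith
    then show ?thesis
    proof cases
      case 1
      then show ?thesis using top[of j] j_in j_eq by auto
    next
      case 2
      then have "2 ^ e < j + p j" "j + p j < 2 ^ Suc (Suc e)"
        using p_in(1)[OF j_in] j_eq h by (auto simp: h_def)
      then have "j + p j = 2 * h"
        using is_power_of_2_between p_in(2)[OF j_in] by (simp add: h_def)
      then show ?thesis using 2 j_eq by simp
    qed (use j_eq in simp)
  qed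
  have lower: "p j = 2 * h - j" if j: "2 * h - n \<le> j" "j < h" for j
  proof -
    have "2 * h - j \<in> {1..n}" "h < 2 * h - j"
      using j h by auto
    then obtain k where k: "k \<in> {1..n}" "p k = 2 * h - j"
      using power_of_2_matching_surj[OF p] by (metis imageE)
    then have "k + (2 * h - j) = 2 * h"
      using top[of k] \<open>h < 2 * h - j\<close> by auto
    then have "k = j" using j by auto
    then show ?thesis using k by simp
  qed
  show ?thesis
    using upper[of i] lower[of i] i h by (cases "h \<le> i") auto
qed

lemma power_of_2_matching_restrict:
  assumes p: "power_of_2_matching n p" and e: "2 ^ e \<le> n" "n < 2 ^ Suc e"
  shows "power_of_2_matching (2 ^ Suc e - n - 1) p"
  unfolding power_of_2_matching_def
proof (intro conjI ballI)
  let ?P = "(2::nat) ^ Suc e" and ?m = "2 ^ Suc e - n - 1"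
  have m: "?m < n" and P: "?P \<le> 2 * n"
    using e by auto
  have inj: "inj_on p {1..n}" and p_in: "\<And>i. i \<in> {1..n} \<Longrightarrow> p i \<in> {1..n} \<and> is_power_of_2 (i + p i)"
    using p by (auto simp: power_of_2_matching_def)
  show "inj_on p {1..?m}"
    using m by (auto intro: inj_on_subset[OF inj])
  fix i assume i: "i \<in> {1..?m}"
  then have i_n: "i \<in> {1..n}" using m by auto
  have "p i \<le> ?m"
  proof (rule ccontr)
    assume "\<not> p i \<le> ?m"
    then have s: "?P - n \<le> p i" using e by auto
    have "?P - p i \<in> {1..n}" "?P - n \<le> ?P - p i"
      using p_in[OF i_n] s e by auto
    then have "p (?P - p i) = p i"
      using power_of_2_matching_top[OF p e, of "?P - p i"] p_in[OF i_n] e by auto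
    then have "?P - p i = i"
      using inj_onD[OF inj _ _ i_n] \<open>?P - p i \<in> {1..n}\<close> by blast
    then show False
      using i s p_in[OF i_n] e by auto
  qed
  then show "p i \<in> {1..?m}"
    using p_in[OF i_n] by auto
  show "is_power_of_2 (i + p i)"
    using p_in[OF i_n] by auto
qed

lemma power_of_2_matching_unique:
  "power_of_2_matching n p \<Longrightarrow> power_of_2_matching n q \<Longrightarrow> i \<in> {1..n} \<Longrightarrow> p i = q i"
proof (induction n arbitrary: i rule: less_induct)
  case (less n)
  define e where "e = floor_log n"
  have e: "2 ^ e \<le> n" "n < 2 ^ Suc e"
    using less.prems(3) floor_log_exp2_le[of n] floor_log_exp2_gt[of n] by (auto simp: e_def)
  show ?case
  proof (cases "2 ^ Suc e - n \<le> i")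
    case True
    then show ?thesis
      using power_of_2_matching_top[OF less.prems(1) e] power_of_2_matching_top[OF less.prems(2) e]
        less.prems(3) by simp
  next
    case False
    then have "i \<in> {1..2 ^ Suc e - n - 1}" "2 ^ Suc e - n - 1 < n"
      using less.prems(3) e by auto
    then show ?thesis
      using less.IH power_of_2_matching_restrict[OF less.prems(1) e]
        power_of_2_matching_restrict[OF less.prems(2) e] by blast
  qed
qed

lemma power_of_2_matching_exists: "\<exists>p. power_of_2_matching n p"
proof (induction n rule: less_induct)
  case (less n)
  show ?case
  proof (cases "n = 0")
    case False
    define P where "P = (2::nat) * 2 ^ floor_log n"
    have P: "P \<le> 2 * n" "n < P" "is_power_of_2 P"
      using False floor_log_exp2_le[of n] floor_log_exp2_gt[of n]
      by (auto simp: P_def is_power_of_2_def intro: exI[of _ "Suc (floor_log n)"])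
    define m where "m = P - n - 1"
    have "m < n" using P by (auto simp: m_def)
    then obtain q where q: "power_of_2_matching m q" using less.IH by blast
    have q_in: "q i \<in> {1..m} \<and> is_power_of_2 (i + q i)" if "i \<in> {1..m}" for i
      using q that by (auto simp: power_of_2_matching_def)
    define p where "p i = (if P - n \<le> i then P - i else q i)" for i
    have "inj_on p {1..n}"
    proof (rule inj_onI)
      fix i j assume ij: "i \<in> {1..n}" "j \<in> {1..n}" "p i = p j"
      consider "P - n \<le> i" "P - n \<le> j" | "\<not> P - n \<le> i" "\<not> P - n \<le> j"
        | "P - n \<le> i \<longleftrightarrow> \<not> P - n \<le> j" by blast
      then show "i = j"
      proof cases
        case 1 then show ?thesis using ij P by (auto simp: p_def)
      next
        case 2
        then have "i \<in> {1..m}" "j \<in> {1..m}" using ij by (auto simp: m_def)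
        then show ?thesis using q ij 2 by (auto simp: p_def power_of_2_matching_def dest: inj_onD)
      next
        case 3
        then have "i \<in> {1..m} \<or> j \<in> {1..m}" using ij by (auto simp: m_def)
        then show ?thesis using q_in[of i] q_in[of j] ij 3 P by (auto simp: p_def m_def)
      qed
    qed
    moreover have "p i \<in> {1..n} \<and> is_power_of_2 (i + p i)" if i: "i \<in> {1..n}" for i
    proof (cases "P - n \<le> i")
      case False
      then have "i \<in> {1..m}" using i by (auto simp: m_def)
      then show ?thesis using q_in[of i] False \<open>m < n\<close> by (auto simp: p_def)
    qed (use i P in \<open>auto simp: p_def\<close>)
    ultimately show ?thesis
      unfolding power_of_2_matching_def by blast
  qed (simp add: power_of_2_matching_def)
qed

lemma power_of_2_pattern_support:
  fixes B :: "'a::comm_ring_1 mat"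
  assumes row_0: "\<And>j. j < Suc n \<Longrightarrow> B $$ (0, j) = of_bool (j = 0)"
    and block: "\<And>i j. 0 < i \<Longrightarrow> i < Suc n \<Longrightarrow> 0 < j \<Longrightarrow> j < Suc n \<Longrightarrow>
      B $$ (i, j) = of_bool (is_power_of_2 (i + j))"
    and p: "p permutes {0..<Suc n}" and nonzero: "(\<Prod>i = 0..<Suc n. B $$ (i, p i)) \<noteq> 0"
  shows "p 0 = 0" and "power_of_2_matching n p"
proof -
  have entry: "B $$ (i, p i) \<noteq> 0" if "i < Suc n" for i
  proof -
    have "i \<in> {0..<Suc n}" using that by simp
    then show ?thesis
      using nonzero prod_zero[OF finite_atLeastLessThan, where f = "\<lambda>i. B $$ (i, p i)"] by blast
  qed
  have p_lt: "p i < Suc n" if "i < Suc n" for i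
    using permutes_in_image[OF p] that by simp
  show p0: "p 0 = 0"
    using entry[of 0] row_0[of "p 0"] p_lt[of 0] by (auto split: if_splits)
  have inj: "inj_on p {0..<Suc n}"
    using permutes_inj_on[OF p] .
  have "p i \<in> {1..n} \<and> is_power_of_2 (i + p i)" if i: "i \<in> {1..n}" for i
  proof -
    have "p i \<noteq> 0"
      using inj_onD[OF inj, of i 0] p0 i by auto
    then have "p i \<in> {1..n}"
      using p_lt[of i] i by auto
    then show ?thesis
      using entry[of i] block[of i "p i"] i by auto
  qed
  moreover have "inj_on p {1..n}"
    by (rule inj_on_subset[OF inj]) auto
  ultimately show "power_of_2_matching n p"
    by (simp add: power_of_2_matching_def)
qed

lemma abs_det_power_of_2_pattern:
  fixes B :: "'a::linordered_idom mat"
  assumes B: "B \<in> carrier_mat (Suc n) (Suc n)"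
    and row_0: "\<And>j. j < Suc n \<Longrightarrow> B $$ (0, j) = of_bool (j = 0)"
    and block: "\<And>i j. 0 < i \<Longrightarrow> i < Suc n \<Longrightarrow> 0 < j \<Longrightarrow> j < Suc n \<Longrightarrow>
      B $$ (i, j) = of_bool (is_power_of_2 (i + j))"
  shows "\<bar>det B\<bar> = 1"
proof -
  obtain p where p: "power_of_2_matching n p"
    using power_of_2_matching_exists by blast
  then have p_in: "p i \<in> {1..n}" "is_power_of_2 (i + p i)" if "i \<in> {1..n}" for i
    using that by (auto simp: power_of_2_matching_def)
  define Q where "Q i = (if i \<in> {1..n} then p i else i)" for i
  have "bij_betw Q {1..n} {1..n}"
    using p power_of_2_matching_surj[OF p]
    by (subst bij_betw_cong[of _ Q p]) (auto simp: Q_def bij_betw_def power_of_2_matching_def)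
  moreover have "bij_betw Q {0} {0}"
    by (simp add: Q_def bij_betw_def)
  ultimately have "bij_betw Q ({0} \<union> {1..n}) ({0} \<union> {1..n})"
    by (intro bij_betw_combine) auto
  moreover have "{0} \<union> {1..n} = {0..<Suc n}"
    by auto
  ultimately have Q: "Q permutes {0..<Suc n}"
    by (intro bij_imp_permutes) (auto simp: Q_def)
  have "p' = Q" if "p' permutes {0..<Suc n}" "(\<Prod>i = 0..<Suc n. B $$ (i, p' i)) \<noteq> 0" for p'
  proof
    fix i
    show "p' i = Q i"
      using power_of_2_pattern_support[OF row_0 block that] permutes_not_in[OF that(1)]
        power_of_2_matching_unique[OF _ p, of p' i]
      by (cases "i \<in> {1..n}") (auto simp: Q_def not_less_eq_eq)
  qed
  then have "det B = signof Q * (\<Prod>i = 0..<Suc n. B $$ (i, Q i))"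
    by (rule det_single_permutation[OF B Q])
  moreover have "B $$ (i, Q i) = 1" if "i \<in> {0..<Suc n}" for i
  proof (cases "i = 0")
    case False
    then have "i \<in> {1..n}" using that by auto
    then show ?thesis using p_in[of i] block[of i "p i"] by (simp add: Q_def)
  qed (use row_0[of 0] in \<open>simp add: Q_def\<close>)
  ultimately have "det B = signof Q"
    by simp
  then show ?thesis
    by (simp add: sign_def)
qed

lemma odd_div_iff_mod_4:
  fixes d y :: int
  assumes d: "d mod 4 = 2" and dvd: "d dvd y"
  shows "odd (y div d) \<longleftrightarrow> y mod 4 = 2"
proof -
  obtain q where y: "y = d * q" using dvd ..
  have "d \<noteq> 0" using d by auto
  then have "y div d = q" by (simp add: y)
  moreover have "y mod 4 = (2 * q) mod 4"
    unfolding y by (metis d mod_mult_left_eq)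
  moreover have "(2 * q) mod 4 = 2 * (q mod 2)"
    using mod_mult_mult1[of 2 q 2] by simp
  ultimately show ?thesis
    by (simp add: odd_iff_mod_2_eq_one)
qed

lemma hankel_det_odd_multiple_of_power:
  fixes a x :: "nat \<Rightarrow> int" and d :: int
  assumes d: "d mod 4 = 2"
    and a_0: "a 0 = 1"
    and a_mod_4: "\<And>m. 0 < m \<Longrightarrow> a m mod 4 = (if is_power_of_2 m then 2 else 0)"
    and x_even: "\<And>i. even (x i)"
    and d_dvd: "\<And>i j. 0 < i \<Longrightarrow> d dvd a (i + j) - x i * a j"
  shows "\<exists>q. hankel_det a n = d ^ n * q \<and> odd q"
proof -
  define A where "A = mat (Suc n) (Suc n) (\<lambda>(i, j). a (i + j))"
  define A' where "A' = mat (Suc n) (Suc n)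
    (\<lambda>(i, j). if i = 0 then a j else (a (i + j) - x i * a j) div d)"
  define B where "B = mat (Suc n) (Suc n) (\<lambda>(i, j). if i = 0 then of_bool (j = 0)
    else if j = 0 then A' $$ (i, 0) else of_bool (is_power_of_2 (i + j)))"
  have a_even: "even (a m)" if "0 < m" for m
  proof -
    have "a m mod 4 = 0 \<or> a m mod 4 = 2"
      using a_mod_4[OF that] by simp
    then show ?thesis by presburger
  qed
  have "det A = d ^ n * det A'"
    by (rule det_row_reduction[of A n A' x d]) (auto simp: A_def A'_def d_dvd)
  moreover have "[A' $$ (i, j) = B $$ (i, j)] (mod 2)" if ij: "i < Suc n" "j < Suc n" for i j
  proof (cases "i = 0 \<or> j = 0")
    case True
    then show ?thesis
      using ij a_0 a_even[of j] by (auto simp: A'_def B_def cong_def)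
  next
    case False
    have "4 dvd x i * a j"
      using x_even[of i] a_even[of j] False by (auto elim!: evenE)
    then have "(a (i + j) - x i * a j) mod 4 = a (i + j) mod 4"
      by (auto elim!: dvdE simp: mod_diff_right_eq[symmetric])
    then have "odd ((a (i + j) - x i * a j) div d) \<longleftrightarrow> is_power_of_2 (i + j)"
      using odd_div_iff_mod_4[OF d d_dvd[of i j]] a_mod_4[of "i + j"] False by auto
    then show ?thesis
      using ij False by (auto simp: A'_def B_def cong_def even_iff_mod_2_eq_zero odd_iff_mod_2_eq_one)
  qed
  then have "[det A' = det B] (mod 2)"
    by (intro det_cong) (auto simp: A'_def B_def)
  moreover have "\<bar>det B\<bar> = 1"
    by (rule abs_det_power_of_2_pattern[of B n]) (auto simp: B_def)
  ultimately have "odd (det A')"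
    by (auto simp: cong_def abs_if split: if_splits)
  then show ?thesis
    using \<open>det A = d ^ n * det A'\<close> by (auto simp: hankel_det_def A_def)
qed

lemma franel_r_0 [simp]: "franel_r r 0 = 1"
  by (simp add: franel_r_def)

lemma franel_eq_franel_r: "franel = franel_r 3"
  by (simp add: fun_eq_iff franel_def franel_r_def)

lemma hankel_det_franel_r_odd_multiple:
  assumes "2 \<le> r"
  shows "\<exists>q. hankel_det (franel_r r) n = 2 ^ n * q \<and> odd q"
proof (rule hankel_det_odd_multiple_of_power[where x = "\<lambda>_. 0"])
  show "franel_r r m mod 4 = (if is_power_of_2 m then 2 else 0)" if "0 < m" for m
    using franel_r_mod_4[OF assms that] .
  show "2 dvd franel_r r (i + j) - 0 * franel_r r j" if "0 < i" for i j
  proof -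
    have "franel_r r (i + j) mod 4 = 0 \<or> franel_r r (i + j) mod 4 = 2"
      using franel_r_mod_4[OF assms, of "i + j"] that by simp
    then show ?thesis by presburger
  qed
qed simp_all

lemma franel_cong_3: "[franel m = (- 1) ^ m] (mod 3)"
proof -
  have cube: "[c ^ 3 = c] (mod 3)" for c :: int
  proof -
    have "c mod 3 = 0 \<or> c mod 3 = 1 \<or> c mod 3 = 2" by presburger
    then have "(c mod 3) ^ 3 mod 3 = c mod 3" by auto
    then show ?thesis by (simp add: cong_def power_mod)
  qed
  have "[franel m = (\<Sum>k\<le>m. int (m choose k))] (mod 3)"
    unfolding franel_def atLeast0AtMost by (intro cong_sum cube)
  also have "(\<Sum>k\<le>m. int (m choose k)) = 2 ^ m"
    by (simp flip: of_nat_sum add: choose_row_sum)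
  also have "[2 ^ m = (- 1) ^ m] (mod (3::int))"
    by (intro cong_pow) (simp add: cong_def)
  finally show ?thesis .
qed

lemma hankel_det_franel_odd_multiple:
  "\<exists>q. hankel_det franel n = 6 ^ n * q \<and> odd q"
proof (rule hankel_det_odd_multiple_of_power[where x = "\<lambda>i. - 2 * (- 1) ^ i"])
  show franel_mod_4: "franel m mod 4 = (if is_power_of_2 m then 2 else 0)" if "0 < m" for m
    using franel_r_mod_4[of 3 m] that by (simp add: franel_eq_franel_r)
  fix i j :: nat
  assume "0 < i"
  then have "franel (i + j) mod 4 = 0 \<or> franel (i + j) mod 4 = 2"
    using franel_mod_4[of "i + j"] by simp
  then have "2 dvd franel (i + j) + 2 * (- 1) ^ i * franel j"
    by presburger
  moreover have "[franel (i + j) + 2 * (- 1) ^ i * franel j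
      = (- 1) ^ (i + j) + 2 * (- 1) ^ i * (- 1) ^ j] (mod 3)"
    by (intro cong_add cong_mult cong_refl franel_cong_3)
  then have "3 dvd franel (i + j) + 2 * (- 1) ^ i * franel j"
    by (simp add: cong_def power_add dvd_eq_mod_eq_0)
  moreover have "2 dvd y \<Longrightarrow> 3 dvd y \<Longrightarrow> 6 dvd y" for y :: int
    by presburger
  ultimately show "6 dvd franel (i + j) - - 2 * (- 1) ^ i * franel j"
    by simp
qed (simp_all add: franel_def)

section \<open>Positivity of the Hankel determinants of the Franel numbers\<close>

lemma pos_def_imp_det_nonzero:
  fixes M :: "real mat"
  assumes M: "M \<in> carrier_mat k k"
    and pos: "\<And>v. (\<exists>i<k. v i \<noteq> 0) \<Longrightarrow> 0 < (\<Sum>i<k. \<Sum>j<k. v i * M $$ (i, j) * v j)"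
  shows "det M \<noteq> 0"
proof
  assume "det M = 0"
  then obtain w where w: "w \<in> carrier_vec k" "w \<noteq> 0\<^sub>v k" "M *\<^sub>v w = 0\<^sub>v k"
    using det_0_iff_vec_prod_zero[OF M] by blast
  have "\<exists>i<k. w $ i \<noteq> 0"
    using w(1,2) by (auto intro: eq_vecI)
  moreover have "(\<Sum>j<k. M $$ (i, j) * w $ j) = 0" if "i < k" for i
    using arg_cong[OF w(3), of "\<lambda>u. u $ i"] that w(1) M
    by (simp add: scalar_prod_def lessThan_atLeast0)
  then have "(\<Sum>i<k. \<Sum>j<k. w $ i * M $$ (i, j) * w $ j) = 0"
    by (simp add: mult.assoc flip: sum_distrib_left)
  ultimately show False
    using pos[of "\<lambda>i. w $ i"] by simp
qed

text \<open>Along the segment from the identity to M all matrices are positive definite, so the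
  determinant cannot change sign.\<close>
lemma pos_def_imp_det_pos:
  fixes M :: "real mat"
  assumes M: "M \<in> carrier_mat k k"
    and pos: "\<And>v. (\<exists>i<k. v i \<noteq> 0) \<Longrightarrow> 0 < (\<Sum>i<k. \<Sum>j<k. v i * M $$ (i, j) * v j)"
  shows "0 < det M"
proof -
  define M' where "M' t = mat k k (\<lambda>(i, j). t * M $$ (i, j) + (1 - t) * of_bool (i = j))" for t
  have M': "M' t \<in> carrier_mat k k" for t
    by (simp add: M'_def)
  have "det (M' t) \<noteq> 0" if t: "0 \<le> t" "t \<le> 1" for t
  proof (rule pos_def_imp_det_nonzero[OF M'])
    fix v :: "nat \<Rightarrow> real"
    assume v: "\<exists>i<k. v i \<noteq> 0"
    have "(\<Sum>j<k. v i * M' t $$ (i, j) * v j)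
        = t * (\<Sum>j<k. v i * M $$ (i, j) * v j) + (1 - t) * v i ^ 2" if "i < k" for i
      using that by (simp add: M'_def algebra_simps sum.distrib sum_distrib_left power2_eq_square
          of_bool_def if_distrib[of "\<lambda>x. _ * x"] cong: if_cong)
    then have "(\<Sum>i<k. \<Sum>j<k. v i * M' t $$ (i, j) * v j)
        = t * (\<Sum>i<k. \<Sum>j<k. v i * M $$ (i, j) * v j) + (1 - t) * (\<Sum>i<k. v i ^ 2)"
      by (simp add: sum.distrib sum_distrib_left)
    moreover have "0 < (\<Sum>i<k. \<Sum>j<k. v i * M $$ (i, j) * v j)"
      using pos[OF v] .
    moreover have "0 < (\<Sum>i<k. v i ^ 2)"
      using v by (auto intro!: sum_pos2)
    ultimately show "0 < (\<Sum>i<k. \<Sum>j<k. v i * M' t $$ (i, j) * v j)"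
      using t by (cases "t = 0") (auto intro!: add_pos_nonneg)
  qed
  moreover have "continuous_on {0..1} (\<lambda>t. det (M' t))"
  proof -
    have "det (M' t) = (\<Sum>p | p permutes {0..<k}. signof p *
        (\<Prod>i = 0..<k. t * M $$ (i, p i) + (1 - t) * of_bool (i = p i)))" for t
      unfolding det_def'[OF M'[of t]]
      by (intro sum.cong prod.cong refl arg_cong2[where f = "(*)"])
         (auto simp: M'_def dest: permutes_in_image)
    then show ?thesis
      by (simp only:) (intro continuous_intros)
  qed
  moreover have "M' 0 = 1\<^sub>m k" and "M' 1 = M"
    using M by (auto intro!: eq_matI simp: M'_def)
  ultimately show ?thesis
    using IVT2'[of "\<lambda>t. det (M' t)" 1 0 0] by (force simp: not_less)
qed

lemma hankel_form_moments:
  fixes t :: "'b \<Rightarrow> real"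
  shows "(\<Sum>i\<le>n. \<Sum>j\<le>n. v i * (\<Sum>s\<in>S. t s ^ (i + j)) * v j) = (\<Sum>s\<in>S. (\<Sum>i\<le>n. v i * t s ^ i)\<^sup>2)"
proof -
  have "(\<Sum>i\<le>n. \<Sum>j\<le>n. v i * (\<Sum>s\<in>S. t s ^ (i + j)) * v j)
      = (\<Sum>i\<le>n. \<Sum>j\<le>n. \<Sum>s\<in>S. (v i * t s ^ i) * (v j * t s ^ j))"
    by (simp add: sum_distrib_left sum_distrib_right power_add mult_ac)
  also have "\<dots> = (\<Sum>s\<in>S. \<Sum>i\<le>n. \<Sum>j\<le>n. (v i * t s ^ i) * (v j * t s ^ j))"
    by (subst sum.swap) (simp add: sum.swap[of _ S])
  also have "\<dots> = (\<Sum>s\<in>S. (\<Sum>i\<le>n. v i * t s ^ i)\<^sup>2)"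
    by (simp add: power2_eq_square sum_product)
  finally show ?thesis .
qed

lemma hankel_form_moments_pos:
  fixes t :: "'b \<Rightarrow> real"
  assumes "finite S" "T \<subseteq> S" "inj_on t T" "n < card T" and v: "\<exists>i\<le>n. v i \<noteq> 0"
  shows "0 < (\<Sum>s\<in>S. (\<Sum>i\<le>n. v i * t s ^ i)\<^sup>2)"
proof -
  define p where "p = (\<Sum>i\<le>n. monom (v i) i)"
  have poly_p: "poly p x = (\<Sum>i\<le>n. v i * x ^ i)" for x
    by (simp add: p_def poly_sum poly_monom)
  have "p \<noteq> 0"
    using v by (auto simp: p_def coeff_sum poly_eq_iff)
  have "\<exists>s\<in>T. poly p (t s) \<noteq> 0"
  proof (rule ccontr)
    assume "\<not> ?thesis"
    then have "t ` T \<subseteq> {x. poly p x = 0}"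
      by auto
    then have "card (t ` T) \<le> degree p"
      using card_mono[OF poly_roots_finite[OF \<open>p \<noteq> 0\<close>]] card_poly_roots_bound[OF \<open>p \<noteq> 0\<close>]
      by (meson le_trans)
    also have "degree p \<le> n"
      unfolding p_def by (intro degree_sum_le) (auto intro: order.trans[OF degree_monom_le])
    finally show False
      using assms(3,4) by (simp add: card_image)
  qed
  then obtain s where "s \<in> S" "poly p (t s) \<noteq> 0"
    using assms(2) by blast
  then show ?thesis
    using assms(1) by (intro sum_pos2[of S s]) (auto simp: poly_p)
qed

definition unit_root :: "nat \<Rightarrow> nat \<Rightarrow> complex" where
  "unit_root N a = cis (2 * pi * real a / real N)"

lemma unit_root_0 [simp]: "unit_root N 0 = 1"
  by (simp add: unit_root_def)

lemma unit_root_power: "unit_root N a ^ i = unit_root N i ^ a"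
  by (simp add: unit_root_def DeMoivre mult_ac)

lemma unit_root_mult_cnj: "unit_root N a * cnj (unit_root N a) = 1"
  by (simp add: unit_root_def cis_cnj cis_mult)

lemma unit_root_eq_iff:
  "0 < N \<Longrightarrow> i < N \<Longrightarrow> k < N \<Longrightarrow> unit_root N i = unit_root N k \<longleftrightarrow> i = k"
  using bij_betw_roots_unity[of N] by (auto simp: unit_root_def bij_betw_def dest: inj_onD)

lemma sum_unit_root_orthogonal:
  assumes i: "i < N" and k: "k < N"
  shows "(\<Sum>a<N. unit_root N a ^ i * cnj (unit_root N a) ^ k) = (if i = k then of_nat N else 0)"
proof -
  define z where "z = unit_root N i * cnj (unit_root N k)"
  have terms: "unit_root N a ^ i * cnj (unit_root N a) ^ k = z ^ a" for a
    by (simp add: z_def power_mult_distrib unit_root_power flip: complex_cnj_power)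
  have "z ^ N = 1"
    using terms[of N] i by (simp add: unit_root_def)
  moreover have "z = 1 \<longleftrightarrow> i = k"
  proof -
    have "z = 1 \<longleftrightarrow> unit_root N i = unit_root N k"
      using unit_root_mult_cnj[of N k]
      by (auto simp: z_def) (metis mult.assoc mult.commute mult_1_right)
    then show ?thesis
      using unit_root_eq_iff i k by simp
  qed
  ultimately show ?thesis
    by (auto simp: terms geometric_sum)
qed

lemma sum_unit_root_coeff:
  assumes "m < N" "k \<le> m"
  shows "(\<Sum>a<N. (\<Sum>i\<le>m. c i * unit_root N a ^ i) * cnj (unit_root N a) ^ k) = of_nat N * c k"
proof -
  have "(\<Sum>a<N. (\<Sum>i\<le>m. c i * unit_root N a ^ i) * cnj (unit_root N a) ^ k)
      = (\<Sum>a<N. \<Sum>i\<le>m. c i * (unit_root N a ^ i * cnj (unit_root N a) ^ k))"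
    by (simp add: sum_distrib_right mult.assoc)
  also have "\<dots> = (\<Sum>i\<le>m. c i * (\<Sum>a<N. unit_root N a ^ i * cnj (unit_root N a) ^ k))"
    by (subst sum.swap) (simp add: sum_distrib_left)
  also have "\<dots> = (\<Sum>i\<le>m. if i = k then c k * of_nat N else 0)"
    using assms by (intro sum.cong refl) (simp add: sum_unit_root_orthogonal)
  finally show ?thesis
    using assms by (simp add: mult.commute)
qed

text \<open>On the unit circle cnj x = 1/x, so this is the Laurent polynomial (1 + x)(1 + y)(1 + 1/(xy)),
  whose m-th power has constant term f_m.\<close>
definition franel_kernel :: "complex \<Rightarrow> complex \<Rightarrow> complex" where
  "franel_kernel x y = (1 + x) * (1 + y) * (1 + cnj x * cnj y)"

lemma franel_kernel_power:
  "franel_kernel x y ^ m = (\<Sum>k\<le>m. of_nat (m choose k)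
     * ((\<Sum>i\<le>m. of_nat (m choose i) * x ^ i) * cnj x ^ k)
     * ((\<Sum>j\<le>m. of_nat (m choose j) * y ^ j) * cnj y ^ k))"
proof -
  have binomial: "(1 + z) ^ m = (\<Sum>i\<le>m. of_nat (m choose i) * z ^ i)" for z :: complex
    using binomial_ring[of z 1 m] by (simp add: add.commute)
  have "franel_kernel x y ^ m = (\<Sum>i\<le>m. of_nat (m choose i) * x ^ i)
      * (\<Sum>j\<le>m. of_nat (m choose j) * y ^ j) * (\<Sum>k\<le>m. of_nat (m choose k) * (cnj x * cnj y) ^ k)"
    by (simp only: franel_kernel_def power_mult_distrib binomial)
  also have "\<dots> = (\<Sum>k\<le>m. (\<Sum>i\<le>m. of_nat (m choose i) * x ^ i)
      * (\<Sum>j\<le>m. of_nat (m choose j) * y ^ j) * (of_nat (m choose k) * (cnj x * cnj y) ^ k))"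
    by (rule sum_distrib_left)
  finally show ?thesis
    by (simp add: power_mult_distrib mult_ac)
qed

lemma sum_franel_kernel_power:
  assumes "m < N"
  shows "(\<Sum>a<N. \<Sum>b<N. franel_kernel (unit_root N a) (unit_root N b) ^ m)
    = of_nat N ^ 2 * of_int (franel m)"
proof -
  let ?c = "\<lambda>k. of_nat (m choose k) :: complex"
  let ?X = "\<lambda>k a. (\<Sum>i\<le>m. ?c i * unit_root N a ^ i) * cnj (unit_root N a) ^ k"
  have product: "(\<Sum>a<N. \<Sum>b<N. c * f a * g b) = c * (\<Sum>a<N. f a) * (\<Sum>b<N. g b)"
    for c :: complex and f g :: "nat \<Rightarrow> complex"
  proof -
    have "(\<Sum>a<N. \<Sum>b<N. c * f a * g b) = c * (\<Sum>a<N. \<Sum>b<N. f a * g b)"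
      by (simp add: sum_distrib_left mult.assoc)
    also have "\<dots> = c * ((\<Sum>a<N. f a) * (\<Sum>b<N. g b))"
      by (simp only: sum_product)
    finally show ?thesis
      by (simp only: mult.assoc)
  qed
  have "(\<Sum>a<N. \<Sum>b<N. franel_kernel (unit_root N a) (unit_root N b) ^ m)
      = (\<Sum>a<N. \<Sum>b<N. \<Sum>k\<le>m. ?c k * ?X k a * ?X k b)"
    by (simp only: franel_kernel_power)
  also have "\<dots> = (\<Sum>k\<le>m. \<Sum>a<N. \<Sum>b<N. ?c k * ?X k a * ?X k b)"
    by (simp only: sum.swap[of _ "{..<N}" "{..m}"])
  also have "\<dots> = (\<Sum>k\<le>m. ?c k * (\<Sum>a<N. ?X k a) * (\<Sum>b<N. ?X k b))"
    by (intro sum.cong refl) (rule product)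
  also have "\<dots> = (\<Sum>k\<le>m. ?c k * (of_nat N * ?c k) * (of_nat N * ?c k))"
    using assms by (intro sum.cong refl) (simp add: sum_unit_root_coeff)
  also have "\<dots> = of_nat N ^ 2 * of_int (franel m)"
    by (simp add: franel_def atLeast0AtMost sum_distrib_left power2_eq_square power3_eq_cube mult_ac)
  finally show ?thesis .
qed

lemma cnj_franel_kernel:
  assumes "x * cnj x = 1" "y * cnj y = 1"
  shows "cnj (franel_kernel x y) = franel_kernel x y"
proof -
  have "cnj (franel_kernel x y) - franel_kernel x y
      = (x * cnj x - 1) * (y - cnj y) + (y * cnj y - 1) * (x - cnj x)"
    by (simp add: franel_kernel_def algebra_simps)
  then show ?thesis
    using assms by simp
qed

definition franel_node :: "nat \<Rightarrow> nat \<times> nat \<Rightarrow> real" where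
  "franel_node N s = Re (franel_kernel (unit_root N (fst s)) (unit_root N (snd s)))"

lemma franel_moment:
  assumes "m < N"
  shows "real N ^ 2 * real_of_int (franel m) = (\<Sum>s\<in>{..<N} \<times> {..<N}. franel_node N s ^ m)"
proof -
  have real: "franel_kernel (unit_root N a) (unit_root N b) = of_real (franel_node N (a, b))" for a b
  proof -
    have "Im (franel_kernel (unit_root N a) (unit_root N b)) = 0"
      using arg_cong[OF cnj_franel_kernel[OF unit_root_mult_cnj unit_root_mult_cnj], of Im]
      by simp
    then show ?thesis
      by (simp add: franel_node_def complex_eq_iff)
  qed
  have "complex_of_real (\<Sum>s\<in>{..<N} \<times> {..<N}. franel_node N s ^ m)
      = (\<Sum>a<N. \<Sum>b<N. franel_kernel (unit_root N a) (unit_root N b) ^ m)"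
    by (simp add: real sum.cartesian_product)
  also have "\<dots> = complex_of_real (real N ^ 2 * real_of_int (franel m))"
    using sum_franel_kernel_power[OF assms] by simp
  finally show ?thesis
    by (simp only: of_real_eq_iff)
qed

lemma franel_node_axis: "franel_node N (a, 0) = 4 + 4 * cos (2 * pi * real a / real N)"
proof -
  define x where "x = unit_root N a"
  have "x * cnj x = 1"
    by (simp add: x_def unit_root_mult_cnj)
  moreover have "x + cnj x = of_real (2 * cos (2 * pi * real a / real N))"
    by (simp add: x_def unit_root_def complex_add_cnj)
  moreover have "franel_kernel x 1 = 2 * (1 + (x + cnj x) + x * cnj x)"
    by (simp add: franel_kernel_def algebra_simps)
  moreover have "franel_node N (a, 0) = Re (franel_kernel x 1)"
    by (simp add: franel_node_def x_def)
  ultimately show ?thesis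
    by simp
qed

lemma inj_on_franel_node_axis: "inj_on (franel_node (Suc (2 * n))) ((\<lambda>a. (a, 0)) ` {..n})"
proof (rule inj_onI, clarsimp)
  fix a b
  assume ab: "a \<le> n" "b \<le> n" "franel_node (Suc (2 * n)) (a, 0) = franel_node (Suc (2 * n)) (b, 0)"
  define \<theta> where "\<theta> a = 2 * pi * real a / real (Suc (2 * n))" for a
  have "0 \<le> \<theta> a" "\<theta> a \<le> pi" "0 \<le> \<theta> b" "\<theta> b \<le> pi"
    using ab(1,2) by (simp_all add: \<theta>_def divide_le_eq)
  moreover have "cos (\<theta> a) = cos (\<theta> b)"
    using ab(3) by (simp add: \<theta>_def franel_node_axis)
  ultimately have "\<theta> a = \<theta> b"
    by (rule cos_inj_pi)
  then show "a = b"
    by (simp add: \<theta>_def)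
qed

lemma hankel_det_franel_pos: "0 < hankel_det franel n"
proof -
  \<comment> \<open>N > 2n covers all moments in the quadratic form, and N \<le> 2n + 1 keeps the n + 1
    nodes with b = 0 distinct.\<close>
  define N where "N = Suc (2 * n)"
  define M where "M = mat (Suc n) (Suc n) (\<lambda>(i, j). real_of_int (franel (i + j)))"
  have "0 < det M"
  proof (rule pos_def_imp_det_pos)
    show "M \<in> carrier_mat (Suc n) (Suc n)"
      by (simp add: M_def)
    fix v :: "nat \<Rightarrow> real"
    assume "\<exists>i<Suc n. v i \<noteq> 0"
    then have v: "\<exists>i\<le>n. v i \<noteq> 0"
      by (auto simp: less_Suc_eq_le)
    have "(\<Sum>i<Suc n. \<Sum>j<Suc n. v i * M $$ (i, j) * v j)
        = (\<Sum>i\<le>n. \<Sum>j\<le>n. v i * real_of_int (franel (i + j)) * v j)"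
      by (simp add: M_def lessThan_Suc_atMost)
    then have "real N ^ 2 * (\<Sum>i<Suc n. \<Sum>j<Suc n. v i * M $$ (i, j) * v j)
        = (\<Sum>i\<le>n. \<Sum>j\<le>n. v i * (real N ^ 2 * real_of_int (franel (i + j))) * v j)"
      by (simp add: sum_distrib_left mult_ac)
    also have "\<dots> = (\<Sum>i\<le>n. \<Sum>j\<le>n. v i * (\<Sum>s\<in>{..<N} \<times> {..<N}. franel_node N s ^ (i + j)) * v j)"
      using franel_moment[of _ N] by (intro sum.cong refl) (simp add: N_def)
    also have "\<dots> = (\<Sum>s\<in>{..<N} \<times> {..<N}. (\<Sum>i\<le>n. v i * franel_node N s ^ i)\<^sup>2)"
      by (rule hankel_form_moments)
    also have "0 < \<dots>"
      using inj_on_franel_node_axis[of n] v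
      by (intro hankel_form_moments_pos[where T = "(\<lambda>a. (a, 0)) ` {..n}"])
         (auto simp: N_def card_image inj_on_def)
    finally show "0 < (\<Sum>i<Suc n. \<Sum>j<Suc n. v i * M $$ (i, j) * v j)"
      by (simp add: zero_less_mult_iff)
  qed
  moreover have "M = map_mat real_of_int (mat (Suc n) (Suc n) (\<lambda>(i, j). franel (i + j)))"
    by (auto simp: M_def)
  then have "det M = real_of_int (hankel_det franel n)"
    by (simp add: hankel_det_def of_int_hom.hom_det)
  ultimately show ?thesis
    by simp
qed

theorem theorem1p1:
  fixes n r :: nat
  assumes "r \<ge> 3"
  shows "((2::int) ^ n dvd hankel_det (franel_r r) n
           \<and> odd (hankel_det (franel_r r) n div 2 ^ n))
       \<and> ((6::int) ^ n dvd hankel_det franel n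
           \<and> hankel_det franel n div 6 ^ n > 0
           \<and> odd (hankel_det franel n div 6 ^ n))"
proof -
  obtain q where q: "hankel_det (franel_r r) n = 2 ^ n * q" "odd q"
    using hankel_det_franel_r_odd_multiple[of r n] assms by auto
  obtain q' where q': "hankel_det franel n = 6 ^ n * q'" "odd q'"
    using hankel_det_franel_odd_multiple by blast
  have "0 < q'"
    using hankel_det_franel_pos[of n] q'(1) by (simp add: zero_less_mult_iff)
  then show ?thesis
    using q q' by simp
qed

end
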